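(* In the Mean-Var-BTS-RED setting, let $p=\frac1{4e\sqrt\pi}$ and let $S'_t=\{\boldsymbol x\in\mathcal X:\Delta(\boldsymbol x)>\omega c_t\sigma_{t-1}(\boldsymbol x)+(1-\omega)c'_t\sigma'_{t-1}(\boldsymbol x)\}$ with $\Delta(\boldsymbol x)=h(\boldsymbol x^*_\omega)-h(\boldsymbol x)$. For every $t\ge1$ and all histories $\mathcal F_{t-1},\mathcal F'_{t-1}$ on which both $E^f(t)$ and $E^g(t)$ hold, $$\mathbb P\big(\boldsymbol x^{(b)}_t\in\mathcal X\setminus S'_t\mid\mathcal F_{t-1},\mathcal F'_{t-1}\big)\ge p^2-1/t^2\qquad\text{for all }b\in[b_t].$$
   Context: Setting (Mean-Var-BTS-RED). $\mathcal X$ finite; $k,k'$ squared-exponential kernels on $\mathcal X$ (so $k(\boldsymbol x,\boldsymbol x)=k'(\boldsymbol x,\boldsymbol x)=1$). Unknown $f\in\mathcal H_k$ with $\|f\|_{\mathcal H_k}\le B$, unknown noise variance $\sigma^2:\mathcal X\to(0,\infty)$ with maximum $\sigma^2_{\max}$, and $g=-\sigma^2$ with $\|g\|_{\mathcal H_{k'}}\le B'$. Querying $\boldsymbol x$ returns $f(\boldsymbol x)+\epsilon$, $\epsilon\sim\mathcal N(0,\sigma^2(\boldsymbol x))$ independently. Horizon $T$, budget $\mathbb B\in\mathbb N$, $R^2>0$, weight $\omega\in[0,1]$, $\lambda=1+2/T$, $\delta\in(0,1)$, minimum replication $n_{\min}\ge2$. GP posterior formulas: from pairs $(\boldsymbol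 x_i,y_i)$, $\mu(\boldsymbol x)=\boldsymbol k(\boldsymbol x)^\top(\boldsymbol K+\lambda I)^{-1}\boldsymbol y$, $s^2(\boldsymbol x,\boldsymbol x')=k(\boldsymbol x,\boldsymbol x')-\boldsymbol k(\boldsymbol x)^\top(\boldsymbol K+\lambda I)^{-1}\boldsymbol k(\boldsymbol x')$. $\mu_{t-1},\sigma^2_{t-1}(\cdot,\cdot)$ (kernel $k$) use pairs $(\boldsymbol x^{(b)}_{t'},y^{(b)}_{t'})$ and $\mu'_{t-1},\sigma'^2_{t-1}(\cdot,\cdot)$ (kernel $k'$) use pairs $(\boldsymbol x^{(b)}_{t'},\widetilde y^{(b)}_{t'})$, $t'<t$; $\sigma_{t-1}(\boldsymbol x)$, $\sigma'_{t-1}(\boldsymbol x)$ are the posterior standard deviations. Algorithm: in iteration $t$, for $b=1,2,\dots$: independently sample $f^{(b)}_t\sim\mathcal{GP}(\mu_{t-1},\beta_t^2\sigma^2_{t-1})$ and $g^{(b)}_t\sim\mathcal{GP}(\mu'_{t-1},\beta_t'^2\sigma'^2_{t-1})$; set $\boldsymbol x^{(b)}_t\in\arg\max_{\boldsymbol x}[\omega f^{(b)}_t(\boldsymbol x)+(1-\omega)g^{(b)}_t(\boldsymbol x)]$ and $n^{(b)}_t=\max\{n_{\min},\lceil(-\mu'_{t-1}(\boldsymbol x^{(b)}_t)+\beta'_t\sigma'_{t-1}(\boldsymbol x^{(b)}_t))/R^2\rceil\}$; stop at the first $b$ with $\sum_{b'\le b}n^{(b')}_t\ge\mathbb B$ and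 set $b_t=b-1$. Each $\boldsymbol x^{(b)}_t$, $b\in[b_t]$, is queried $n^{(b)}_t$ times; $y^{(b)}_t$ is the empirical mean and $\widetilde y^{(b)}_t=-\frac1{n^{(b)}_t-1}\sum_n(y^{(b)}_{t,n}-y^{(b)}_t)^2$ the negated unbiased empirical variance. $\tau_{t-1}=\sum_{t'<t}b_{t'}$. $\Gamma_m$ ($\Gamma'_m$) is the maximum over $|A|\le m$ of $\frac12\log\det(I+\lambda^{-1}K_A)$ for $k$ ($k'$). $\beta_t=B+R\sqrt{2(\Gamma_{\tau_{t-1}}+1+\log(3/\delta))}$, $\beta'_t=B'+R'\sqrt{2(\Gamma'_{\tau_{t-1}}+1+\log(3/\delta))}$ for a constant $R'>0$, $c_t=\beta_t(1+\sqrt{2\log(2\mathbb B|\mathcal X|t^2)})$, $c'_t=\beta'_t(1+\sqrt{2\log(2\mathbb B|\mathcal X|t^2)})$. $h(\boldsymbol x)=\omega f(\boldsymbol x)+(1-\omega)g(\boldsymbol x)$, $\boldsymbol x^*_\omega\in\arg\max h$. $\mathcal F_{t-1}$ ($\mathcal F'_{t-1}$) is the history of observed (input, empirical mean) (resp. (input, empirical noise variance)) pairs up to iteration $t-1$. $E^f(t)$: $|\mu_{t-1}(\boldsymbol x)-f(\boldsymbol x)|\le\beta_t\sigma_{t-1}(\boldsymbol x)$ for all $\boldsymbol x$; $E^g(t)$: $|\mu'_{t-1}(\boldsymbol x)-g(\boldsymbol x)|\le\beta'_t\sigma'_{t-1}(\boldsymbol x)$ for all $\boldsymbol x$. *)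

theory Defs
  imports "HOL-Probability.Probability"
begin

definition se_kernel :: "real \<Rightarrow> 'a::real_normed_vector \<Rightarrow> 'a \<Rightarrow> real" where
  "se_kernel l x y = exp (- (norm (x - y))\<^sup>2 / (2 * l\<^sup>2))"

text \<open>RKHS of a kernel on a finite domain S: the span of the sections k(.,x), x in S,
  with the norm of sum_x alpha_x k(.,x) being sqrt(sum alpha_x alpha_y k(x,y)).\<close>
definition rkhs_reps :: "('a \<Rightarrow> 'a \<Rightarrow> real) \<Rightarrow> 'a set \<Rightarrow> ('a \<Rightarrow> real) \<Rightarrow> ('a \<Rightarrow> real) set" where
  "rkhs_reps k S f = {\<alpha>. \<forall>y\<in>S. f y = (\<Sum>x\<in>S. \<alpha> x * k y x)}"

definition in_rkhs :: "('a \<Rightarrow> 'a \<Rightarrow> real) \<Rightarrow> 'a set \<Rightarrow> ('a \<Rightarrow> real) \<Rightarrow> bool" where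
  "in_rkhs k S f \<longleftrightarrow> rkhs_reps k S f \<noteq> {}"

definition rkhs_norm :: "('a \<Rightarrow> 'a \<Rightarrow> real) \<Rightarrow> 'a set \<Rightarrow> ('a \<Rightarrow> real) \<Rightarrow> real" where
  "rkhs_norm k S f = Inf ((\<lambda>\<alpha>. sqrt (\<Sum>x\<in>S. \<Sum>y\<in>S. \<alpha> x * \<alpha> y * k x y)) ` rkhs_reps k S f)"

definition det_fn :: "nat \<Rightarrow> (nat \<Rightarrow> nat \<Rightarrow> real) \<Rightarrow> real" where
  "det_fn n A = (\<Sum>p | p permutes {..<n}. of_int (sign p) * (\<Prod>i<n. A i (p i)))"

text \<open>The solution v = A^{-1} b (A invertible), as the unique vector supported on indices below n.\<close>
definition solve_fn :: "nat \<Rightarrow> (nat \<Rightarrow> nat \<Rightarrow> real) \<Rightarrow> (nat \<Rightarrow> real) \<Rightarrow> (nat \<Rightarrow> real)" where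
  "solve_fn n A b = (THE v. (\<forall>i<n. (\<Sum>j<n. A i j * v j) = b i) \<and> (\<forall>i\<ge>n. v i = 0))"

definition gram_reg :: "('a \<Rightarrow> 'a \<Rightarrow> real) \<Rightarrow> real \<Rightarrow> 'a list \<Rightarrow> nat \<Rightarrow> nat \<Rightarrow> real" where
  "gram_reg k lam xs i j = k (xs ! i) (xs ! j) + (if i = j then lam else 0)"

text \<open>GP posterior mean  k(x)^T (K + lam I)^{-1} y  from data pairs (x_i, y_i).\<close>
definition post_mean :: "('a \<Rightarrow> 'a \<Rightarrow> real) \<Rightarrow> real \<Rightarrow> ('a \<times> real) list \<Rightarrow> 'a \<Rightarrow> real" where
  "post_mean k lam D x =
     (let xs = map fst D; n = length D;
          \<alpha> = solve_fn n (gram_reg k lam xs) (\<lambda>i. snd (D ! i))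
      in \<Sum>i<n. k x (xs ! i) * \<alpha> i)"

text \<open>GP posterior covariance  k(x,x') - k(x)^T (K + lam I)^{-1} k(x')  (depends only on the inputs).\<close>
definition post_cov :: "('a \<Rightarrow> 'a \<Rightarrow> real) \<Rightarrow> real \<Rightarrow> 'a list \<Rightarrow> 'a \<Rightarrow> 'a \<Rightarrow> real" where
  "post_cov k lam xs x x' =
     (let n = length xs;
          \<gamma> = solve_fn n (gram_reg k lam xs) (\<lambda>i. k (xs ! i) x')
      in k x x' - (\<Sum>i<n. k x (xs ! i) * \<gamma> i))"

definition post_sd :: "('a \<Rightarrow> 'a \<Rightarrow> real) \<Rightarrow> real \<Rightarrow> 'a list \<Rightarrow> 'a \<Rightarrow> real" where
  "post_sd k lam xs x = sqrt (post_cov k lam xs x x)"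

text \<open>Maximum information gain Gamma_m: maximum over (multi)sets A of at most m points of S
  (represented as lists) of (1/2) log det(I + lam^{-1} K_A).\<close>
definition max_info_gain :: "('a \<Rightarrow> 'a \<Rightarrow> real) \<Rightarrow> real \<Rightarrow> 'a set \<Rightarrow> nat \<Rightarrow> real" where
  "max_info_gain k lam S m =
     Max ((\<lambda>xs. (1/2) * ln (det_fn (length xs)
              (\<lambda>i j. (if i = j then 1 else 0) + k (xs ! i) (xs ! j) / lam)))
          ` {xs. set xs \<subseteq> S \<and> length xs \<le> m})"

text \<open>Gaussian random vector indexed by a finite set S (a GP restricted to S), with mean m and
  covariance C: every linear combination is univariate normal with the corresponding mean and
  variance (degenerate, i.e. a.s. constant, when the variance is 0).\<close>
definition gaussian_field ::
  "'b measure \<Rightarrow> 'a set \<Rightarrow> ('a \<Rightarrow> real) \<Rightarrow> ('a \<Rightarrow> 'a \<Rightarrow> real) \<Rightarrow> ('b \<Rightarrow> 'a \<Rightarrow> real) \<Rightarrow> bool" where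
  "gaussian_field M S m C F \<longleftrightarrow>
     prob_space M \<and> (\<forall>x\<in>S. (\<lambda>\<omega>. F \<omega> x) \<in> borel_measurable M) \<and>
     (\<forall>a. let Y = (\<lambda>\<omega>. \<Sum>x\<in>S. a x * F \<omega> x);
              mu = (\<Sum>x\<in>S. a x * m x);
              v = (\<Sum>x\<in>S. \<Sum>y\<in>S. a x * a y * C x y)
          in if v > 0 then distributed M lborel Y (normal_density mu (sqrt v))
             else (AE \<omega> in M. Y \<omega> = mu))"

end

theory Submission
  imports Defs
begin

text \<open>Two Gaussian facts drive the argument. Anti-concentration: a Gaussian exceeds its mean by
  one standard deviation with probability at least p = 1/(4 e sqrt pi); on the events
  E^f(t), E^g(t) the true values f(x*), g(x*) lie below that level, so the independent samples
  are optimistic at x* with probability at least p^2. Concentration: with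
  L = sqrt(2 log(2 B |X| t^2)), a union bound shows that all samples stay within L standard
  deviations of the posterior mean except with probability 1/t^2. On the intersection of these
  events the maximiser of w f_t + (1-w) g_t has gap at most w c_t sigma + (1-w) c'_t sigma'.
  Reading beta_t sigma as a standard deviation needs beta_t \<ge> 0, i.e. B \<ge> 0, which holds
  because the squared-exponential kernel is positive semidefinite.\<close>

section \<open>Nonnegativity of the squared-exponential kernel\<close>

lemma sum_sum_inner_power_nonneg:
  fixes S :: "'a::euclidean_space set"
  assumes "finite S"
  shows "0 \<le> (\<Sum>x\<in>S. \<Sum>y\<in>S. c x * c y * (inner x y) ^ n)"
proof (induction n arbitrary: c)
  case 0
  have "(\<Sum>x\<in>S. \<Sum>y\<in>S. c x * c y * (inner x y) ^ 0) = (\<Sum>x\<in>S. c x) * (\<Sum>y\<in>S. c y)"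
    by (simp add: sum_product)
  then show ?case by simp
next
  case (Suc n)
  \<comment> \<open>Expanding one factor of inner x y in a basis writes the form as a sum of forms of degree n.\<close>
  have split: "c x * c y * (inner x y) ^ Suc n
      = (\<Sum>i\<in>Basis. (c x * inner x i) * (c y * inner y i) * (inner x y) ^ n)" for x y
  proof -
    have "c x * c y * (inner x y) ^ Suc n = inner x y * (c x * c y * (inner x y) ^ n)"
      by (simp add: mult_ac)
    also have "\<dots> = (\<Sum>i\<in>Basis. inner x i * inner y i) * (c x * c y * (inner x y) ^ n)"
      by (simp only: euclidean_inner[of x y, symmetric])
    also have "\<dots> = (\<Sum>i\<in>Basis. (c x * inner x i) * (c y * inner y i) * (inner x y) ^ n)"
      unfolding sum_distrib_right by (intro sum.cong refl) (simp only: mult_ac)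
    finally show ?thesis .
  qed
  have "(\<Sum>x\<in>S. \<Sum>y\<in>S. c x * c y * (inner x y) ^ Suc n)
      = (\<Sum>x\<in>S. \<Sum>i\<in>Basis. \<Sum>y\<in>S. (c x * inner x i) * (c y * inner y i) * (inner x y) ^ n)"
    unfolding split by (rule sum.cong[OF refl], rule sum.swap)
  also have "\<dots> = (\<Sum>i\<in>Basis. \<Sum>x\<in>S. \<Sum>y\<in>S. (c x * inner x i) * (c y * inner y i) * (inner x y) ^ n)"
    by (rule sum.swap)
  also have "\<dots> \<ge> 0"
    by (intro sum_nonneg Suc.IH)
  finally show ?case .
qed

lemma sum_sum_exp_inner_nonneg:
  fixes S :: "'a::euclidean_space set"
  assumes "finite S" "0 \<le> a"
  shows "0 \<le> (\<Sum>x\<in>S. \<Sum>y\<in>S. c x * c y * exp (a * inner x y))"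
proof -
  have exp_series: "(\<lambda>n. z ^ n / fact n) sums exp z" for z :: real
    using exp_converges[of z] by (simp add: field_simps)
  have series: "(\<lambda>n. \<Sum>x\<in>S. \<Sum>y\<in>S. c x * c y * ((a * inner x y) ^ n / fact n))
      sums (\<Sum>x\<in>S. \<Sum>y\<in>S. c x * c y * exp (a * inner x y))"
    by (intro sums_sum sums_mult exp_series)
  have terms_nonneg: "0 \<le> (\<Sum>x\<in>S. \<Sum>y\<in>S. c x * c y * ((a * inner x y) ^ n / fact n))" for n
  proof -
    have "(\<Sum>x\<in>S. \<Sum>y\<in>S. c x * c y * ((a * inner x y) ^ n / fact n))
        = (a ^ n / fact n) * (\<Sum>x\<in>S. \<Sum>y\<in>S. c x * c y * (inner x y) ^ n)"
      unfolding sum_distrib_left by (intro sum.cong refl) (simp add: power_mult_distrib)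
    then show ?thesis
      using sum_sum_inner_power_nonneg[OF assms(1)] assms(2) by simp
  qed
  show ?thesis
    by (rule sums_le[OF terms_nonneg sums_zero series])
qed

lemma se_kernel_quadratic_form_nonneg:
  fixes S :: "'a::euclidean_space set"
  assumes "finite S" "0 < l"
  shows "0 \<le> (\<Sum>x\<in>S. \<Sum>y\<in>S. c x * c y * se_kernel l x y)"
proof -
  define e where "e x = exp (- (norm x)\<^sup>2 / (2 * l\<^sup>2))" for x :: 'a
  have factor: "se_kernel l x y = e x * e y * exp ((1 / l\<^sup>2) * inner x y)" for x y
  proof -
    have "(norm (x - y))\<^sup>2 = (norm x)\<^sup>2 + (norm y)\<^sup>2 - 2 * inner x y"
      by (simp add: power2_norm_eq_inner inner_diff_left inner_diff_right inner_commute)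
    then have "- (norm (x - y))\<^sup>2 / (2 * l\<^sup>2)
        = - (norm x)\<^sup>2 / (2 * l\<^sup>2) + - (norm y)\<^sup>2 / (2 * l\<^sup>2) + (1 / l\<^sup>2) * inner x y"
      using assms(2) by (simp add: field_simps)
    then show ?thesis
      by (simp only: se_kernel_def e_def exp_add)
  qed
  have "(\<Sum>x\<in>S. \<Sum>y\<in>S. c x * c y * se_kernel l x y)
      = (\<Sum>x\<in>S. \<Sum>y\<in>S. (c x * e x) * (c y * e y) * exp ((1 / l\<^sup>2) * inner x y))"
    by (simp only: factor mult_ac)
  also have "\<dots> \<ge> 0"
    by (rule sum_sum_exp_inner_nonneg[OF assms(1)]) simp
  finally show ?thesis .
qed

lemma rkhs_norm_se_kernel_nonneg:
  fixes S :: "'a::euclidean_space set"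
  assumes "finite S" "0 < l" "in_rkhs (se_kernel l) S f"
  shows "0 \<le> rkhs_norm (se_kernel l) S f"
  unfolding rkhs_norm_def
proof (rule cInf_greatest)
  show "(\<lambda>\<alpha>. sqrt (\<Sum>x\<in>S. \<Sum>y\<in>S. \<alpha> x * \<alpha> y * se_kernel l x y)) ` rkhs_reps (se_kernel l) S f \<noteq> {}"
    using assms(3) unfolding in_rkhs_def by blast
qed (use se_kernel_quadratic_form_nonneg[OF assms(1,2)] in auto)

lemma max_info_gain_nonneg:
  assumes "finite S"
  shows "0 \<le> max_info_gain k lam S m"
proof -
  let ?gain = "\<lambda>xs. (1/2) * ln (det_fn (length xs)
                 (\<lambda>i j. (if i = j then 1 else 0) + k (xs ! i) (xs ! j) / lam))"
  have "finite {xs. set xs \<subseteq> S \<and> length xs \<le> m}"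
    by (rule finite_lists_length_le[OF assms])
  moreover have "[] \<in> {xs. set xs \<subseteq> S \<and> length xs \<le> m}"
    by simp
  ultimately have "?gain [] \<le> Max (?gain ` {xs. set xs \<subseteq> S \<and> length xs \<le> m})"
    by (intro Max_ge finite_imageI imageI)
  moreover have "?gain [] = 0"
    by (simp add: det_fn_def)
  ultimately show ?thesis
    unfolding max_info_gain_def by simp
qed

lemma se_confidence_width_nonneg:
  fixes S :: "'a::euclidean_space set"
  assumes "finite S" "0 < l" "in_rkhs (se_kernel l) S f" "rkhs_norm (se_kernel l) S f \<le> B"
    and "0 < R" "0 < \<delta>" "\<delta> < 1"
  shows "0 \<le> B + R * sqrt (2 * (max_info_gain k lam S m + 1 + ln (3 / \<delta>)))"
proof -
  have "0 \<le> B"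
    using rkhs_norm_se_kernel_nonneg[OF assms(1-3)] assms(4) by linarith
  moreover have "0 \<le> max_info_gain k lam S m + 1 + ln (3 / \<delta>)"
    using max_info_gain_nonneg[OF assms(1)] assms(6,7) by simp
  ultimately show ?thesis
    using assms(5) by simp
qed

section \<open>Tail bounds for the standard normal distribution\<close>

lemma inverse_4_exp_sqrt_pi_le_std_normal_density:
  "1 / (4 * exp 1 * sqrt pi) \<le> std_normal_density (3/2) / 2"
proof -
  have "exp (1/8::real) ^ 2 = exp (1/4)"
    by (simp flip: exp_add add: power2_eq_square)
  also have "\<dots> \<le> sqrt 2 ^ 2"
    using exp_bound_half[of "1/4::real"] by simp
  finally have exp_eighth: "exp (1/8::real) \<le> sqrt 2"
    by (rule power2_le_imp_le) simp
  have "std_normal_density (3/2) / 2 = exp (- 9 / 8) / (2 * sqrt 2 * sqrt pi)"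
    by (simp add: std_normal_density_def real_sqrt_mult power2_eq_square)
  also have "exp (- 9 / 8) = exp (-1) / exp (1/8::real)"
    by (simp flip: exp_diff)
  finally have density: "std_normal_density (3/2) / 2 = exp (-1) / (2 * sqrt 2 * exp (1/8) * sqrt pi)"
    by simp
  have "2 * sqrt 2 * exp (1/8) * sqrt pi \<le> 2 * sqrt 2 * sqrt 2 * sqrt pi"
    using exp_eighth by (intro mult_right_mono mult_left_mono) auto
  also have "\<dots> = 4 * sqrt pi"
    by simp
  finally have "exp (-1) / (4 * sqrt pi) \<le> exp (-1) / (2 * sqrt 2 * exp (1/8) * sqrt pi)"
    by (intro divide_left_mono) auto
  moreover have "1 / (4 * exp 1 * sqrt pi) = exp (-1) / (4 * sqrt pi)"
    by (simp add: exp_minus field_simps)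
  ultimately show ?thesis
    using density by simp
qed

lemma std_normal_prob_ge_1:
  assumes "prob_space M" "distributed M lborel Z std_normal_density"
  shows "1 / (4 * exp 1 * sqrt pi) \<le> measure M {\<omega>\<in>space M. 1 \<le> Z \<omega>}"
proof -
  interpret prob_space M by fact
  \<comment> \<open>Bound the tail from below by the density at 3/2 on the interval [1, 3/2].\<close>
  have "(\<integral>\<^sup>+x. ennreal (std_normal_density (3/2)) * indicator {1..3/2::real} x \<partial>lborel)
      = ennreal (std_normal_density (3/2)) * emeasure lborel {1..3/2::real}"
    by (rule nn_integral_cmult_indicator) simp
  also have "emeasure lborel {1..3/2::real} = ennreal (1/2)"
    using emeasure_lborel_Icc[of 1 "3/2::real"] by (simp del: emeasure_lborel_Icc)
  also have "ennreal (std_normal_density (3/2)) * ennreal (1/2) = ennreal (std_normal_density (3/2) / 2)"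
    by (subst ennreal_mult[symmetric]) auto
  finally have "ennreal (std_normal_density (3/2) / 2)
      = (\<integral>\<^sup>+x. ennreal (std_normal_density (3/2)) * indicator {1..3/2::real} x \<partial>lborel)" ..
  also have "\<dots> \<le> (\<integral>\<^sup>+x. ennreal (std_normal_density x) * indicator {1..} x \<partial>lborel)"
  proof (intro nn_integral_mono)
    fix x :: real
    show "ennreal (std_normal_density (3/2)) * indicator {1..3/2::real} x
        \<le> ennreal (std_normal_density x) * indicator {1..} x"
    proof (cases "x \<in> {1..3/2::real}")
      case True
      then have "x\<^sup>2 \<le> (3/2)\<^sup>2"
        by (intro power_mono) auto
      then have "std_normal_density (3/2) \<le> std_normal_density x"
        unfolding std_normal_density_def by (intro mult_left_mono) auto
      then show ?thesis
        using True by (simp add: ennreal_leI)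
    qed simp
  qed
  also have "\<dots> = emeasure M (Z -` {1..} \<inter> space M)"
    by (rule distributed_emeasure[OF assms(2), symmetric]) simp
  also have "Z -` {1..} \<inter> space M = {\<omega>\<in>space M. 1 \<le> Z \<omega>}"
    by auto
  finally have "std_normal_density (3/2) / 2 \<le> measure M {\<omega>\<in>space M. 1 \<le> Z \<omega>}"
    by (simp add: emeasure_eq_measure ennreal_le_iff)
  then show ?thesis
    using inverse_4_exp_sqrt_pi_le_std_normal_density by linarith
qed

lemma exponential_density_tail:
  assumes "0 < l" "0 \<le> a"
  shows "emeasure (density lborel (exponential_density l)) {a<..} = ennreal (exp (- l * a))"
proof -
  let ?N = "density lborel (exponential_density l)"
  interpret N: prob_space ?N
    using prob_space_exponential_density[OF assms(1)] .
  have "emeasure ?N {..a} = ennreal (1 - exp (- a * l))"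
    using emeasure_erlang_density[OF assms(1), of 0 a] assms(2) by (simp add: erlang_CDF_def mult.commute)
  moreover have "0 \<le> a * l"
    using assms by simp
  ultimately have "measure ?N {..a} = 1 - exp (- a * l)"
    by (simp add: N.emeasure_eq_measure)
  moreover have "measure ?N {a<..} = 1 - measure ?N {..a}"
    using N.prob_compl[of "{..a}"] by (simp add: Compl_eq_Diff_UNIV[symmetric] Compl_atMost)
  ultimately show ?thesis
    by (simp add: N.emeasure_eq_measure mult.commute)
qed

lemma std_normal_prob_gt:
  assumes "prob_space M" "distributed M lborel Z std_normal_density" "0 < L"
  shows "measure M {\<omega>\<in>space M. L < Z \<omega>} \<le> exp (- L\<^sup>2 / 2) / (L * sqrt (2 * pi))"
proof -
  interpret prob_space M by fact
  \<comment> \<open>On (L, \<infinity>) the normal density is dominated by C times the exponential density with rate L,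
    since -x^2/2 \<le> L^2/2 - L x.\<close>
  define C where "C = exp (L\<^sup>2 / 2) / (L * sqrt (2 * pi))"
  have C: "0 \<le> C"
    using assms(3) by (simp add: C_def)
  have "emeasure M {\<omega>\<in>space M. L < Z \<omega>} = emeasure M (Z -` {L<..} \<inter> space M)"
    by (rule arg_cong[where f="emeasure M"]) auto
  also have "\<dots> = (\<integral>\<^sup>+x. ennreal (std_normal_density x) * indicator {L<..} x \<partial>lborel)"
    by (rule distributed_emeasure[OF assms(2)]) simp
  also have "\<dots> \<le> (\<integral>\<^sup>+x. ennreal C * (ennreal (exponential_density L x) * indicator {L<..} x) \<partial>lborel)"
  proof (intro nn_integral_mono)
    fix x :: real
    show "ennreal (std_normal_density x) * indicator {L<..} x
        \<le> ennreal C * (ennreal (exponential_density L x) * indicator {L<..} x)"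
    proof (cases "L < x")
      case True
      have "- x\<^sup>2 / 2 \<le> L\<^sup>2 / 2 + - x * L"
        using sum_power2_ge_zero[of "x - L" 0] by (simp add: power2_eq_square algebra_simps)
      then have "exp (- x\<^sup>2 / 2) \<le> exp (L\<^sup>2 / 2) * exp (- x * L)"
        by (simp flip: exp_add)
      then have "std_normal_density x \<le> C * exponential_density L x"
        using True assms(3)
        by (simp add: std_normal_density_def C_def exponential_density_def field_simps)
      then show ?thesis
        using True C assms(3) by (simp add: ennreal_mult[symmetric] ennreal_leI del: ennreal_mult)
    qed simp
  qed
  also have "\<dots> = ennreal C * ennreal (exp (- L\<^sup>2))"
    using exponential_density_tail[OF assms(3), of L] assms(3)
    by (simp add: nn_integral_cmult emeasure_density power2_eq_square)
  finally have "measure M {\<omega>\<in>space M. L < Z \<omega>} \<le> C * exp (- L\<^sup>2)"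
    using C by (simp add: emeasure_eq_measure ennreal_le_iff flip: ennreal_mult)
  also have "C * exp (- L\<^sup>2) = exp (- L\<^sup>2 / 2) / (L * sqrt (2 * pi))"
    by (simp add: C_def field_simps flip: exp_add)
  finally show ?thesis .
qed

section \<open>Gaussian random variables and fields\<close>

text \<open>As in gaussian_field, a nonpositive variance means that Y = m almost surely.\<close>
definition gaussian_rv :: "'b measure \<Rightarrow> ('b \<Rightarrow> real) \<Rightarrow> real \<Rightarrow> real \<Rightarrow> bool" where
  "gaussian_rv M Y m v \<longleftrightarrow>
     (if 0 < v then distributed M lborel Y (normal_density m (sqrt v)) else (AE \<omega> in M. Y \<omega> = m))"

lemma gaussian_field_coordinate:
  assumes "gaussian_field M S m C F" "finite S" "x \<in> S"
  shows "(\<lambda>\<omega>. F \<omega> x) \<in> borel_measurable M" "gaussian_rv M (\<lambda>\<omega>. F \<omega> x) (m x) (C x x)"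
proof -
  show "(\<lambda>\<omega>. F \<omega> x) \<in> borel_measurable M"
    using assms(1,3) unfolding gaussian_field_def by blast
  define a where "a y = (if y = x then 1 else (0::real))" for y
  have point_eval: "(\<Sum>y\<in>S. a y * u y) = u x" for u :: "_ \<Rightarrow> real"
  proof -
    have "(\<Sum>y\<in>S. a y * u y) = (\<Sum>y\<in>S. if y = x then u y else 0)"
      by (rule sum.cong) (auto simp: a_def)
    then show ?thesis
      using assms(2,3) by simp
  qed
  have variance: "(\<Sum>y\<in>S. \<Sum>z\<in>S. a y * a z * C y z) = C x x"
    by (simp add: mult.assoc flip: sum_distrib_left) (simp add: point_eval)
  have "let Y = (\<lambda>\<omega>. \<Sum>y\<in>S. a y * F \<omega> y); \<mu> = (\<Sum>y\<in>S. a y * m y);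
            v = (\<Sum>y\<in>S. \<Sum>z\<in>S. a y * a z * C y z)
        in if v > 0 then distributed M lborel Y (normal_density \<mu> (sqrt v))
           else (AE \<omega> in M. Y \<omega> = \<mu>)"
    using assms(1) unfolding gaussian_field_def by blast
  then show "gaussian_rv M (\<lambda>\<omega>. F \<omega> x) (m x) (C x x)"
    unfolding Let_def variance point_eval gaussian_rv_def .
qed

lemma gaussian_rv_prob_ge:
  assumes "prob_space M" and [measurable]: "Y \<in> borel_measurable M"
    and "gaussian_rv M Y m v" "a \<le> m + sqrt v"
  shows "1 / (4 * exp 1 * sqrt pi) \<le> measure M {\<omega>\<in>space M. a \<le> Y \<omega>}"
proof -
  interpret prob_space M by fact
  show ?thesis
  proof (cases "0 < v")
    case True
    then have "distributed M lborel (\<lambda>\<omega>. (Y \<omega> - m) / sqrt v) std_normal_density"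
      using assms(3) normal_standard_normal_convert[of "sqrt v"] by (simp add: gaussian_rv_def)
    then have "1 / (4 * exp 1 * sqrt pi) \<le> measure M {\<omega>\<in>space M. 1 \<le> (Y \<omega> - m) / sqrt v}"
      by (rule std_normal_prob_ge_1[OF assms(1)])
    also have "\<dots> \<le> measure M {\<omega>\<in>space M. a \<le> Y \<omega>}"
      using assms(4) True by (intro finite_measure_mono) (auto simp: field_simps)
    finally show ?thesis .
  next
    case False
    then have "a \<le> m"
      using assms(4) real_sqrt_le_0_iff[of v] by linarith
    have "AE \<omega> in M. Y \<omega> = m"
      using False assms(3) by (simp add: gaussian_rv_def)
    then have "AE \<omega> in M. a \<le> Y \<omega>"
      by eventually_elim (use \<open>a \<le> m\<close> in simp)
    then have "measure M {\<omega>\<in>space M. a \<le> Y \<omega>} = 1"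
      by (subst prob_Collect_eq_1) auto
    moreover have "1 * 1 \<le> exp 1 * sqrt pi"
      using pi_gt3 by (intro mult_mono) auto
    ultimately show ?thesis
      by simp
  qed
qed

lemma gaussian_rv_prob_abs_gt:
  assumes "prob_space M" and [measurable]: "Y \<in> borel_measurable M"
    and "gaussian_rv M Y m v" "0 \<le> v" "0 < L" "2 \<le> L * sqrt (2 * pi)"
  shows "measure M {\<omega>\<in>space M. L * sqrt v < \<bar>Y \<omega> - m\<bar>} \<le> exp (- L\<^sup>2 / 2)"
proof -
  interpret prob_space M by fact
  show ?thesis
  proof (cases "0 < v")
    case True
    define s where "s = sqrt v"
    have s: "0 < s"
      using True by (simp add: s_def)
    have Z: "distributed M lborel (\<lambda>\<omega>. (Y \<omega> - m) / s) std_normal_density"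
      using assms(3) True normal_standard_normal_convert[OF s] by (simp add: gaussian_rv_def s_def)
    then have Z': "distributed M lborel (\<lambda>\<omega>. (m - Y \<omega>) / s) std_normal_density"
      using normal_density_affine[OF Z, of "-1" 0] by simp
    have "measure M {\<omega>\<in>space M. L * s < \<bar>Y \<omega> - m\<bar>}
        \<le> measure M ({\<omega>\<in>space M. L < (Y \<omega> - m) / s} \<union> {\<omega>\<in>space M. L < (m - Y \<omega>) / s})"
      using s by (intro finite_measure_mono) (auto simp: field_simps abs_if split: if_splits)
    also have "\<dots> \<le> measure M {\<omega>\<in>space M. L < (Y \<omega> - m) / s} + measure M {\<omega>\<in>space M. L < (m - Y \<omega>) / s}"
      by (rule measure_Un_le) auto
    also have "\<dots> \<le> 2 * (exp (- L\<^sup>2 / 2) / (L * sqrt (2 * pi)))"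
      using std_normal_prob_gt[OF assms(1) Z assms(5)] std_normal_prob_gt[OF assms(1) Z' assms(5)]
      by simp
    also have "\<dots> \<le> 2 * (exp (- L\<^sup>2 / 2) / 2)"
      using assms(5,6) by (intro mult_left_mono divide_left_mono) auto
    finally show ?thesis
      by (simp add: s_def)
  next
    case False
    then have "v = 0"
      using assms(4) by simp
    have "AE \<omega> in M. Y \<omega> = m"
      using False assms(3) by (simp add: gaussian_rv_def)
    then have "AE \<omega> in M. \<not> L * sqrt v < \<bar>Y \<omega> - m\<bar>"
      by eventually_elim (simp add: \<open>v = 0\<close>)
    then have "measure M {\<omega>\<in>space M. L * sqrt v < \<bar>Y \<omega> - m\<bar>} = 0"
      by (subst prob_Collect_eq_0) auto
    then show ?thesis
      by simp
  qed
qed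

lemma gaussian_field_prob_deviation:
  assumes gf: "gaussian_field M S m K F" and S: "finite S" and K: "\<forall>x\<in>S. 0 \<le> K x x"
    and L: "0 < L" "2 \<le> L * sqrt (2 * pi)"
  shows "{\<omega>\<in>space M. \<exists>x\<in>S. L * sqrt (K x x) < \<bar>F \<omega> x - m x\<bar>} \<in> sets M"
    and "measure M {\<omega>\<in>space M. \<exists>x\<in>S. L * sqrt (K x x) < \<bar>F \<omega> x - m x\<bar>}
         \<le> real (card S) * exp (- L\<^sup>2 / 2)"
proof -
  interpret prob_space M
    using gf unfolding gaussian_field_def by blast
  define D where "D x = {\<omega>\<in>space M. L * sqrt (K x x) < \<bar>F \<omega> x - m x\<bar>}" for x
  have D_sets: "D x \<in> sets M" if "x \<in> S" for x
    using gaussian_field_coordinate(1)[OF gf S that] unfolding D_def by measurable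
  have union: "{\<omega>\<in>space M. \<exists>x\<in>S. L * sqrt (K x x) < \<bar>F \<omega> x - m x\<bar>} = (\<Union>x\<in>S. D x)"
    by (auto simp: D_def)
  show "{\<omega>\<in>space M. \<exists>x\<in>S. L * sqrt (K x x) < \<bar>F \<omega> x - m x\<bar>} \<in> sets M"
    unfolding union using S D_sets by blast
  have "measure M (\<Union>x\<in>S. D x) \<le> (\<Sum>x\<in>S. measure M (D x))"
    using D_sets by (intro measure_UNION_le S) auto
  also have "\<dots> \<le> (\<Sum>x\<in>S. exp (- L\<^sup>2 / 2))"
    using gaussian_field_coordinate[OF gf S] K L prob_space_axioms unfolding D_def
    by (intro sum_mono gaussian_rv_prob_abs_gt) auto
  finally show "measure M {\<omega>\<in>space M. \<exists>x\<in>S. L * sqrt (K x x) < \<bar>F \<omega> x - m x\<bar>}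
      \<le> real (card S) * exp (- L\<^sup>2 / 2)"
    unfolding union by simp
qed

lemma (in prob_space) indep_var_of_indep_vars:
  assumes "indep_vars M' X I" "i \<in> I" "j \<in> I" "i \<noteq> j"
  shows "indep_var (M' i) (X i) (M' j) (X j)"
  unfolding indep_var_eq indep_sets2_eq
proof (intro conjI ballI)
  let ?\<sigma> = "\<lambda>k. sigma_sets (space M) {X k -` A \<inter> space M | A. A \<in> sets (M' k)}"
  have rv: "random_variable (M' k) (X k)" and indep: "indep_sets ?\<sigma> I" if "k \<in> I" for k
    using assms(1) that unfolding indep_vars_def by auto
  show "random_variable (M' i) (X i)" "random_variable (M' j) (X j)"
    using rv assms(2,3) by auto
  show "?\<sigma> i \<subseteq> events" "?\<sigma> j \<subseteq> events"
    using indep assms(2,3) unfolding indep_sets_def by auto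
  fix a b assume "a \<in> ?\<sigma> i" "b \<in> ?\<sigma> j"
  then have "prob (b \<inter> a) = prob a * prob b"
    using indep_setsD[OF indep[OF assms(2)], of "{i, j}" "\<lambda>k. if k = i then a else b"] assms
    by auto
  then show "prob (a \<inter> b) = prob a * prob b"
    by (simp add: Int_commute)
qed

lemma (in prob_space) prob_Int_indep_fields_ge:
  fixes F G :: "'a \<Rightarrow> 'i \<Rightarrow> real"
  assumes indep: "indep_var (Pi\<^sub>M S (\<lambda>_. borel)) (\<lambda>\<omega>. restrict (F \<omega>) S)
                            (Pi\<^sub>M S (\<lambda>_. borel)) (\<lambda>\<omega>. restrict (G \<omega>) S)"
    and "x \<in> S" "y \<in> S"
  shows "prob ({\<omega>\<in>space M. a \<le> F \<omega> x} \<inter> {\<omega>\<in>space M. b \<le> G \<omega> y})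
    = prob {\<omega>\<in>space M. a \<le> F \<omega> x} * prob {\<omega>\<in>space M. b \<le> G \<omega> y}"
proof -
  let ?above = "\<lambda>z v::real. {\<phi>\<in>space (Pi\<^sub>M S (\<lambda>_. borel)). v \<le> \<phi> z}"
  have above_sets: "?above z v \<in> sets (Pi\<^sub>M S (\<lambda>_. borel))" if "z \<in> S" for z v
    by (rule measurable_sets_Collect[OF measurable_component_singleton[OF that]]) simp
  have preimages: "(\<lambda>\<omega>. restrict (F \<omega>) S) -` ?above x a \<inter> space M = {\<omega>\<in>space M. a \<le> F \<omega> x}"
    "(\<lambda>\<omega>. restrict (G \<omega>) S) -` ?above y b \<inter> space M = {\<omega>\<in>space M. b \<le> G \<omega> y}"
    "(\<lambda>\<omega>. (restrict (F \<omega>) S, restrict (G \<omega>) S)) -` (?above x a \<times> ?above y b) \<inter> space M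
      = {\<omega>\<in>space M. a \<le> F \<omega> x} \<inter> {\<omega>\<in>space M. b \<le> G \<omega> y}"
    using assms(2,3) by (auto simp: space_PiM)
  show ?thesis
    using indep_varD[OF indep above_sets[of x a, OF assms(2)] above_sets[of y b, OF assms(3)]] unfolding preimages .
qed

section \<open>The regret of a Thompson sample\<close>

lemma sqrt_square_mult:
  fixes \<beta> c :: real
  assumes "0 \<le> \<beta>" "0 \<le> \<beta> * sqrt c"
  shows "sqrt (\<beta>\<^sup>2 * c) = \<beta> * sqrt c" "0 \<le> \<beta>\<^sup>2 * c"
proof -
  show "sqrt (\<beta>\<^sup>2 * c) = \<beta> * sqrt c"
    using assms(1) by (simp add: real_sqrt_mult)
  show "0 \<le> \<beta>\<^sup>2 * c"
    using assms by (cases "\<beta> = 0") (auto simp: zero_le_mult_iff)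
qed

lemma regret_le_of_optimistic_maximiser:
  fixes w :: real
  assumes "0 \<le> w" "w \<le> 1"
    and "w * F\<^sub>s + (1 - w) * G\<^sub>s \<le> w * F\<^sub>x + (1 - w) * G\<^sub>x"
    and "f\<^sub>s \<le> F\<^sub>s" "g\<^sub>s \<le> G\<^sub>s"
    and "\<bar>F\<^sub>x - \<mu>\<bar> \<le> L * s" "\<bar>\<mu> - f\<^sub>x\<bar> \<le> s" "\<bar>G\<^sub>x - \<nu>\<bar> \<le> L * s'" "\<bar>\<nu> - g\<^sub>x\<bar> \<le> s'"
  shows "(w * f\<^sub>s + (1 - w) * g\<^sub>s) - (w * f\<^sub>x + (1 - w) * g\<^sub>x)
    \<le> w * ((1 + L) * s) + (1 - w) * ((1 + L) * s')"
proof -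
  have "F\<^sub>x \<le> f\<^sub>x + (1 + L) * s" "G\<^sub>x \<le> g\<^sub>x + (1 + L) * s'"
    using assms(6-9) by (auto simp: abs_le_iff algebra_simps)
  then have "w * F\<^sub>x \<le> w * (f\<^sub>x + (1 + L) * s)" "(1 - w) * G\<^sub>x \<le> (1 - w) * (g\<^sub>x + (1 + L) * s')"
    using assms(1,2) by (auto intro: mult_left_mono)
  moreover have "w * f\<^sub>s \<le> w * F\<^sub>s" "(1 - w) * g\<^sub>s \<le> (1 - w) * G\<^sub>s"
    using assms by (auto intro: mult_left_mono)
  ultimately show ?thesis
    using assms(3) by (simp add: algebra_simps)
qed

lemma sqrt_two_ln_bounds:
  fixes N :: real
  assumes "2 \<le> N"
  shows "0 < sqrt (2 * ln N)" "2 \<le> sqrt (2 * ln N) * sqrt (2 * pi)"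
    and "exp (- (sqrt (2 * ln N))\<^sup>2 / 2) = 1 / N"
proof -
  have "exp (1/3::real) \<le> 2"
    using exp_bound_half[of "1/3::real"] by simp
  then have "ln (exp (1/3)) \<le> ln (2::real)"
    by (subst ln_le_cancel_iff) auto
  moreover have "ln 2 \<le> ln N"
    using assms by simp
  ultimately have ln_N: "1/3 \<le> ln N"
    by simp
  then show "0 < sqrt (2 * ln N)"
    by simp
  have "3 * (1/3) \<le> pi * ln N"
    using pi_gt3 ln_N by (intro mult_mono) auto
  then have "2\<^sup>2 \<le> 4 * (pi * ln N)"
    by simp
  also have "\<dots> = (sqrt (2 * ln N) * sqrt (2 * pi))\<^sup>2"
    using ln_N by (simp add: power_mult_distrib)
  finally show "2 \<le> sqrt (2 * ln N) * sqrt (2 * pi)"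
    by (rule power2_le_imp_le) (use ln_N in simp)
  show "exp (- (sqrt (2 * ln N))\<^sup>2 / 2) = 1 / N"
    using ln_N assms by (simp add: exp_minus inverse_eq_divide)
qed

lemma deviation_level_bounds:
  fixes K Bud t :: nat
  assumes "1 \<le> K" "1 \<le> Bud" "1 \<le> t"
  defines "L \<equiv> sqrt (2 * ln (2 * real Bud * real K * (real t)\<^sup>2))"
  shows "0 < L" "2 \<le> L * sqrt (2 * pi)" "2 * real K * exp (- L\<^sup>2 / 2) \<le> 1 / (real t)\<^sup>2"
proof -
  have Bud_t: "1 \<le> real Bud * (real t)\<^sup>2"
    using assms(2,3) mult_mono[of 1 "real Bud" 1 "(real t)\<^sup>2"] by simp
  then have "1 * 1 \<le> real K * (real Bud * (real t)\<^sup>2)"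
    using assms(1) by (intro mult_mono) auto
  then have "2 \<le> 2 * real Bud * real K * (real t)\<^sup>2"
    by (simp add: mult_ac)
  note bounds = sqrt_two_ln_bounds[OF this, folded L_def]
  then show "0 < L" "2 \<le> L * sqrt (2 * pi)"
    by simp_all
  have "2 * real K * exp (- L\<^sup>2 / 2) = 1 / (real Bud * (real t)\<^sup>2)"
    using bounds(3) assms(1) by simp
  also have "\<dots> \<le> 1 / (real t)\<^sup>2"
    using assms(2,3) mult_right_mono[of 1 "real Bud" "(real t)\<^sup>2"]
    by (intro divide_left_mono) auto
  finally show "2 * real K * exp (- L\<^sup>2 / 2) \<le> 1 / (real t)\<^sup>2" .
qed

lemma thompson_sample_regret_prob:
  fixes S :: "'a set" and F G :: "'b \<Rightarrow> 'a \<Rightarrow> real" and X :: "'b \<Rightarrow> 'a"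
  assumes M: "prob_space M" and S: "finite S"
    and F_gp: "gaussian_field M S \<mu> (\<lambda>x y. \<beta>\<^sup>2 * C x y) F"
    and G_gp: "gaussian_field M S \<nu> (\<lambda>x y. \<gamma>\<^sup>2 * D x y) G"
    and indep: "prob_space.indep_var M (Pi\<^sub>M S (\<lambda>_. borel)) (\<lambda>\<omega>. restrict (F \<omega>) S)
                                        (Pi\<^sub>M S (\<lambda>_. borel)) (\<lambda>\<omega>. restrict (G \<omega>) S)"
    and conf_f: "\<forall>x\<in>S. \<bar>\<mu> x - f x\<bar> \<le> \<beta> * sqrt (C x x)"
    and conf_g: "\<forall>x\<in>S. \<bar>\<nu> x - g x\<bar> \<le> \<gamma> * sqrt (D x x)"
    and \<beta>: "0 \<le> \<beta>" and \<gamma>: "0 \<le> \<gamma>" and w: "0 \<le> w" "w \<le> 1"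
    and X_meas: "X \<in> measurable M (count_space UNIV)"
    and X_max: "\<forall>\<omega>\<in>space M. X \<omega> \<in> S \<and>
      (\<forall>x\<in>S. w * F \<omega> x + (1 - w) * G \<omega> x \<le> w * F \<omega> (X \<omega>) + (1 - w) * G \<omega> (X \<omega>))"
    and xs: "x\<^sub>s \<in> S"
    and L: "0 < L" "2 \<le> L * sqrt (2 * pi)"
  shows "measure M {\<omega>\<in>space M. X \<omega> \<in> S -
      {x\<in>S. (w * f x\<^sub>s + (1 - w) * g x\<^sub>s) - (w * f x + (1 - w) * g x)
         > w * (\<beta> * (1 + L)) * sqrt (C x x) + (1 - w) * (\<gamma> * (1 + L)) * sqrt (D x x)}}
    \<ge> (1 / (4 * exp 1 * sqrt pi))\<^sup>2 - 2 * real (card S) * exp (- L\<^sup>2 / 2)"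
    (is "measure M ?good \<ge> ?p\<^sup>2 - _")
proof -
  interpret prob_space M by (rule M)
  have "0 \<le> \<beta> * sqrt (C x x)" "0 \<le> \<gamma> * sqrt (D x x)" if "x \<in> S" for x
    using conf_f conf_g that abs_ge_zero order_trans by blast+
  note sd_f = sqrt_square_mult[OF \<beta> this(1)] and sd_g = sqrt_square_mult[OF \<gamma> this(2)]
  note F_coord = gaussian_field_coordinate[OF F_gp S] and G_coord = gaussian_field_coordinate[OF G_gp S]
  define opt_f where "opt_f = {\<omega>\<in>space M. f x\<^sub>s \<le> F \<omega> x\<^sub>s}"
  define opt_g where "opt_g = {\<omega>\<in>space M. g x\<^sub>s \<le> G \<omega> x\<^sub>s}"
  define dev_f where "dev_f = {\<omega>\<in>space M. \<exists>x\<in>S. L * sqrt (\<beta>\<^sup>2 * C x x) < \<bar>F \<omega> x - \<mu> x\<bar>}"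
  define dev_g where "dev_g = {\<omega>\<in>space M. \<exists>x\<in>S. L * sqrt (\<gamma>\<^sup>2 * D x x) < \<bar>G \<omega> x - \<nu> x\<bar>}"
  have opt_f_prob: "?p \<le> prob opt_f"
    unfolding opt_f_def using conf_f xs
    by (intro gaussian_rv_prob_ge[OF M F_coord[OF xs]]) (auto simp: sd_f(1) abs_le_iff)
  have opt_g_prob: "?p \<le> prob opt_g"
    unfolding opt_g_def using conf_g xs
    by (intro gaussian_rv_prob_ge[OF M G_coord[OF xs]]) (auto simp: sd_g(1) abs_le_iff)
  have dev_f: "dev_f \<in> events" "prob dev_f \<le> real (card S) * exp (- L\<^sup>2 / 2)"
    unfolding dev_f_def using gaussian_field_prob_deviation[OF F_gp S _ L] sd_f(2) by auto
  have dev_g: "dev_g \<in> events" "prob dev_g \<le> real (card S) * exp (- L\<^sup>2 / 2)"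
    unfolding dev_g_def using gaussian_field_prob_deviation[OF G_gp S _ L] sd_g(2) by auto
  have good_sets: "?good \<in> events"
    by (rule measurable_sets_Collect[OF X_meas]) simp
  have opt_indep: "prob (opt_f \<inter> opt_g) = prob opt_f * prob opt_g"
    unfolding opt_f_def opt_g_def by (rule prob_Int_indep_fields_ge[OF indep xs xs])
  have "opt_f \<inter> opt_g - (dev_f \<union> dev_g) \<subseteq> ?good"
  proof
    fix \<omega> assume \<omega>: "\<omega> \<in> opt_f \<inter> opt_g - (dev_f \<union> dev_g)"
    then have "\<omega> \<in> space M"
      by (simp add: opt_f_def)
    with X_max obtain x where x: "x = X \<omega>" "x \<in> S"
      and max: "w * F \<omega> x\<^sub>s + (1 - w) * G \<omega> x\<^sub>s \<le> w * F \<omega> x + (1 - w) * G \<omega> x"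
      using xs by blast
    have "\<not> L * sqrt (\<beta>\<^sup>2 * C x x) < \<bar>F \<omega> x - \<mu> x\<bar>" "\<not> L * sqrt (\<gamma>\<^sup>2 * D x x) < \<bar>G \<omega> x - \<nu> x\<bar>"
      using \<omega> \<open>\<omega> \<in> space M\<close> x(2) by (auto simp: dev_f_def dev_g_def)
    then have "\<bar>F \<omega> x - \<mu> x\<bar> \<le> L * (\<beta> * sqrt (C x x))" "\<bar>G \<omega> x - \<nu> x\<bar> \<le> L * (\<gamma> * sqrt (D x x))"
      using sd_f(1)[OF x(2)] sd_g(1)[OF x(2)] by simp_all
    moreover have "f x\<^sub>s \<le> F \<omega> x\<^sub>s" "g x\<^sub>s \<le> G \<omega> x\<^sub>s"
      using \<omega> by (auto simp: opt_f_def opt_g_def)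
    ultimately have "(w * f x\<^sub>s + (1 - w) * g x\<^sub>s) - (w * f x + (1 - w) * g x)
        \<le> w * ((1 + L) * (\<beta> * sqrt (C x x))) + (1 - w) * ((1 + L) * (\<gamma> * sqrt (D x x)))"
      using regret_le_of_optimistic_maximiser[OF w max] conf_f conf_g x(2) by blast
    then show "\<omega> \<in> ?good"
      using \<open>\<omega> \<in> space M\<close> x by (auto simp: ac_simps)
  qed
  then have "prob (opt_f \<inter> opt_g) \<le> prob (?good \<union> dev_f \<union> dev_g)"
    using good_sets dev_f dev_g by (intro finite_measure_mono) auto
  also have "\<dots> \<le> prob (?good \<union> dev_f) + prob dev_g"
    using good_sets dev_f dev_g by (intro measure_Un_le) auto
  also have "\<dots> \<le> prob ?good + prob dev_f + prob dev_g"
    using measure_Un_le[OF good_sets dev_f(1)] by linarith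
  finally have "prob opt_f * prob opt_g \<le> prob ?good + prob dev_f + prob dev_g"
    by (simp add: opt_indep)
  moreover have "?p\<^sup>2 \<le> prob opt_f * prob opt_g"
    unfolding power2_eq_square using opt_f_prob opt_g_prob by (intro mult_mono) auto
  ultimately show ?thesis
    using dev_f dev_g by linarith
qed

theorem mainTheorem14:
  fixes Xs :: "'a::euclidean_space set"
    and l l' :: real
    and f noisevar :: "'a \<Rightarrow> real"
    and B B' R R' w \<delta> :: real
    and T Bud t :: nat
    and hist :: "('a \<times> real \<times> real) list"
    and M :: "'b measure"
    and F G :: "nat \<Rightarrow> 'b \<Rightarrow> 'a \<Rightarrow> real"
    and Xsel :: "nat \<Rightarrow> 'b \<Rightarrow> 'a"
    and xstar :: 'a
  assumes Xs_fin: "finite Xs" and Xs_ne: "Xs \<noteq> {}"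
    and l_pos: "l > 0" and l'_pos: "l' > 0"
    and f_rkhs: "in_rkhs (se_kernel l) Xs f" and f_norm: "rkhs_norm (se_kernel l) Xs f \<le> B"
    and noise_pos: "\<forall>x\<in>Xs. noisevar x > 0"
    and g_rkhs: "in_rkhs (se_kernel l') Xs (\<lambda>x. - noisevar x)"
    and g_norm: "rkhs_norm (se_kernel l') Xs (\<lambda>x. - noisevar x) \<le> B'"
    and T_pos: "T \<ge> 1" and Bud_pos: "Bud \<ge> 1"
    and R_pos: "R > 0" and R'_pos: "R' > 0"
    and w_range: "0 \<le> w" "w \<le> 1"
    and \<delta>_range: "0 < \<delta>" "\<delta> < 1"
    and t_pos: "t \<ge> 1"
    and hist_in: "set (map fst hist) \<subseteq> Xs"
    \<comment> \<open>event E^f(t)\<close>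
    and Ef: "\<forall>x\<in>Xs.
      \<bar>post_mean (se_kernel l) (1 + 2 / real T) (map (\<lambda>(x, y, z). (x, y)) hist) x - f x\<bar>
      \<le> (B + R * sqrt (2 * (max_info_gain (se_kernel l) (1 + 2 / real T) Xs (length hist)
                              + 1 + ln (3 / \<delta>))))
        * post_sd (se_kernel l) (1 + 2 / real T) (map fst hist) x"
    \<comment> \<open>event E^g(t), with g = - noise variance\<close>
    and Eg: "\<forall>x\<in>Xs.
      \<bar>post_mean (se_kernel l') (1 + 2 / real T) (map (\<lambda>(x, y, z). (x, z)) hist) x - (- noisevar x)\<bar>
      \<le> (B' + R' * sqrt (2 * (max_info_gain (se_kernel l') (1 + 2 / real T) Xs (length hist)
                              + 1 + ln (3 / \<delta>))))
        * post_sd (se_kernel l') (1 + 2 / real T) (map fst hist) x"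
    and M_prob: "prob_space M"
    \<comment> \<open>f_t^(b) ~ GP(mu_{t-1}, beta_t^2 sigma_{t-1}^2)\<close>
    and F_gp: "\<forall>b. gaussian_field M Xs
      (post_mean (se_kernel l) (1 + 2 / real T) (map (\<lambda>(x, y, z). (x, y)) hist))
      (\<lambda>x x'. (B + R * sqrt (2 * (max_info_gain (se_kernel l) (1 + 2 / real T) Xs (length hist)
                              + 1 + ln (3 / \<delta>))))\<^sup>2
              * post_cov (se_kernel l) (1 + 2 / real T) (map fst hist) x x')
      (F b)"
    \<comment> \<open>g_t^(b) ~ GP(mu'_{t-1}, beta'_t^2 sigma'_{t-1}^2)\<close>
    and G_gp: "\<forall>b. gaussian_field M Xs
      (post_mean (se_kernel l') (1 + 2 / real T) (map (\<lambda>(x, y, z). (x, z)) hist))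
      (\<lambda>x x'. (B' + R' * sqrt (2 * (max_info_gain (se_kernel l') (1 + 2 / real T) Xs (length hist)
                              + 1 + ln (3 / \<delta>))))\<^sup>2
              * post_cov (se_kernel l') (1 + 2 / real T) (map fst hist) x x')
      (G b)"
    \<comment> \<open>all samples are drawn independently\<close>
    and indep: "prob_space.indep_vars M (\<lambda>_. Pi\<^sub>M Xs (\<lambda>_. borel))
      (\<lambda>(b, j) \<omega>. restrict (if j then F b \<omega> else G b \<omega>) Xs) (UNIV :: (nat \<times> bool) set)"
    \<comment> \<open>x_t^(b) is a (measurably selected) maximiser of w f^(b) + (1-w) g^(b) over Xs\<close>
    and Xsel_meas: "\<forall>b. Xsel b \<in> measurable M (count_space UNIV)"
    and Xsel_max: "\<forall>b. \<forall>\<omega>\<in>space M. Xsel b \<omega> \<in> Xs \<and>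
      (\<forall>x\<in>Xs. w * F b \<omega> x + (1 - w) * G b \<omega> x
               \<le> w * F b \<omega> (Xsel b \<omega>) + (1 - w) * G b \<omega> (Xsel b \<omega>))"
    \<comment> \<open>x*_omega maximises h = w f + (1-w) g\<close>
    and xstar: "xstar \<in> Xs"
      "\<forall>x\<in>Xs. w * f x + (1 - w) * (- noisevar x) \<le> w * f xstar + (1 - w) * (- noisevar xstar)"
  shows "\<forall>b\<ge>1. measure M {\<omega> \<in> space M. Xsel b \<omega> \<in> Xs -
      {x \<in> Xs. (w * f xstar + (1 - w) * (- noisevar xstar)) - (w * f x + (1 - w) * (- noisevar x))
         > w * ((B + R * sqrt (2 * (max_info_gain (se_kernel l) (1 + 2 / real T) Xs (length hist)
                              + 1 + ln (3 / \<delta>))))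
                * (1 + sqrt (2 * ln (2 * real Bud * real (card Xs) * (real t)\<^sup>2))))
             * post_sd (se_kernel l) (1 + 2 / real T) (map fst hist) x
           + (1 - w) * ((B' + R' * sqrt (2 * (max_info_gain (se_kernel l') (1 + 2 / real T) Xs (length hist)
                              + 1 + ln (3 / \<delta>))))
                * (1 + sqrt (2 * ln (2 * real Bud * real (card Xs) * (real t)\<^sup>2))))
             * post_sd (se_kernel l') (1 + 2 / real T) (map fst hist) x}}
    \<ge> (1 / (4 * exp 1 * sqrt pi))\<^sup>2 - 1 / (real t)\<^sup>2"
    (is "\<forall>b\<ge>1. ?bound \<le> measure M (?good b)")
proof (intro allI impI)
  fix b :: nat
  have "1 \<le> card Xs"
    using Xs_fin Xs_ne by (simp add: Suc_le_eq card_gt_0_iff)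
  note L = deviation_level_bounds[OF this Bud_pos t_pos]
  interpret prob_space M by (rule M_prob)
  have "indep_var (Pi\<^sub>M Xs (\<lambda>_. borel)) (\<lambda>\<omega>. restrict (F b \<omega>) Xs)
                  (Pi\<^sub>M Xs (\<lambda>_. borel)) (\<lambda>\<omega>. restrict (G b \<omega>) Xs)"
    using indep_var_of_indep_vars[OF indep, of "(b, True)" "(b, False)"] by simp
  from thompson_sample_regret_prob[OF M_prob Xs_fin F_gp[rule_format] G_gp[rule_format] this
          Ef[unfolded post_sd_def] Eg[unfolded post_sd_def]
          se_confidence_width_nonneg[OF Xs_fin l_pos f_rkhs f_norm R_pos \<delta>_range]
          se_confidence_width_nonneg[OF Xs_fin l'_pos g_rkhs g_norm R'_pos \<delta>_range]
          w_range Xsel_meas[rule_format] Xsel_max[THEN spec] xstar(1) L(1,2)] L(3)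
  show "?bound \<le> measure M (?good b)"
    unfolding post_sd_def by linarith
qed

end
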